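(* Let $\nu\in\mathbb{N}$, $0<\kappa<1$ and let $\tilde\kappa:=\inf\{\mathrm{vol}^\nu(B_1(0)\setminus M): M\subset B_1(0)\text{ measurable},\ \mathrm{vol}^{2\nu}(M^{\mathbb{C}})\le\kappa\,\mathrm{vol}^{2\nu}(U_1(0))\}$. Then (a) $\tilde\kappa>0$; (b) for any $\rho>0$ and any measurable set $M\subset B_\rho(0)$ with $\mathrm{vol}^\nu(B_\rho(0)\setminus M)\le\tilde\kappa\rho^\nu$ it follows that $\mathrm{vol}^{2\nu}(M^{\mathbb{C}})\ge\kappa\,\mathrm{vol}^{2\nu}(U_\rho(0))$.
   Context: $B_\rho(0)=\{x\in\mathbb{R}^\nu:\max_i|x_i|<\rho\}$, $U_\rho(0)=\{z\in\mathbb{C}^\nu:\max_i|z_i|<\rho\}$. For $M\subset\mathbb{R}^\nu$, $M^{\mathbb{C}}:=\{(z_1,\dots,z_\nu)\in\mathbb{C}^\nu:(|z_1|,\dots,|z_\nu|)\in M\}\subset\mathbb{C}^\nu\cong\mathbb{R}^{2\nu}$. $\mathrm{vol}^k$ denotes $k$-dimensional Lebesgue measure. *)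

theory Defs
  imports "HOL-Analysis.Analysis"
begin

text \<open>Real sup-norm ball B_rho(0) in R^nu (index type 'n, nu = CARD('n)).\<close>
definition real_polyball :: "real \<Rightarrow> (real ^ 'n) set" where
  "real_polyball \<rho> = {x. \<forall>i. \<bar>x $ i\<bar> < \<rho>}"

text \<open>Complex polydisc U_rho(0) in C^nu (identified with R^(2 nu)).\<close>
definition complex_polydisc :: "real \<Rightarrow> (complex ^ 'n) set" where
  "complex_polydisc \<rho> = {z. \<forall>i. cmod (z $ i) < \<rho>}"

definition complexification :: "(real ^ 'n) set \<Rightarrow> (complex ^ 'n) set" where
  "complexification M = {z. (\<chi> i. cmod (z $ i)) \<in> M}"

definition kappa_tilde :: "'n::finite itself \<Rightarrow> real \<Rightarrow> real" where
  "kappa_tilde _ \<kappa> = Inf {measure lebesgue ((real_polyball 1 :: (real ^ 'n) set) - M) | M.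
       M \<subseteq> real_polyball 1 \<and> M \<in> sets lebesgue \<and>
       measure lebesgue (complexification M) \<le> \<kappa> * measure lebesgue (complex_polydisc 1 :: (complex ^ 'n) set)}"

end

theory Submission
  imports Defs
begin

(* The map z |-> (|z_1|, ..., |z_nu|) pulls Lebesgue null sets back to null sets: the preimage of A
   lies in the image of A x R^nu under the smooth polar-coordinate map (r, theta) |-> (r_i e^(i theta_i)),
   and smooth maps between spaces of equal dimension preserve null sets. So A |-> vol(A^C) is a finite
   measure on B_1(0), absolutely continuous with respect to Lebesgue measure, and hence vol(E^C) is
   uniformly small when vol(E) is small. As U_1(0) is covered by M^C and (B_1(0) - M)^C, this gives
   kappa_tilde > 0. For (b) with rho = 1: if vol(M^C) < kappa vol(U_1(0)) although
   vol(B_1(0) - M) <= kappa_tilde, then adding to M a subset of B_1(0) - M of small positive measure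
   keeps M admissible for the infimum but strictly shrinks its complement, a contradiction.
   The case of arbitrary rho follows by scaling. *)

lemma absolutely_continuous_small_measure:
  assumes "finite_measure N" "absolutely_continuous M N" "sets N = sets M" "0 < e"
  obtains \<delta> :: real where "0 < \<delta>"
    "\<And>A. A \<in> fmeasurable M \<Longrightarrow> measure M A < \<delta> \<Longrightarrow> measure N A < e"
proof -
  interpret N: finite_measure N by fact
  have "\<exists>\<delta>>0. \<forall>A\<in>fmeasurable M. measure M A < \<delta> \<longrightarrow> measure N A < e"
  proof (rule ccontr)
    (* Otherwise, by Borel-Cantelli, sets of M-measure below 2^-k but N-measure at least e have an
       M-null limsup, whose N-measure is still at least e. *)
    assume "\<not> ?thesis"
    then have "\<forall>k::nat. \<exists>A\<in>fmeasurable M. measure M A < (1/2)^k \<and> e \<le> measure N A"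
      by (metis not_less zero_less_divide_1_iff zero_less_numeral zero_less_power)
    then obtain A where A: "\<And>k. A k \<in> fmeasurable M" "\<And>k. measure M (A k) < (1/2)^k"
        and large: "\<And>k. e \<le> measure N (A k)"
      by metis
    have "summable (\<lambda>k. measure M (A k))"
      by (rule summable_comparison_test'[where g="\<lambda>k. (1/2)^k"])
         (use A(2) in \<open>auto intro: less_imp_le\<close>)
    then have "limsup A \<in> null_sets M"
      using A(1) by (intro borel_cantelli_limsup1) (auto simp: fmeasurable_def)
    then have null: "limsup A \<in> null_sets N"
      using assms(2) by (auto simp: absolutely_continuous_def)
    define B where "B n = (\<Union>k\<in>{n..}. A k)" for n
    have B: "range B \<subseteq> sets N" "decseq B"
      using A(1) assms(3) by (auto simp: B_def decseq_def fmeasurable_def intro: order_trans)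
    have "(\<lambda>n. measure N (B n)) \<longlonglongrightarrow> measure N (\<Inter>n. B n)"
      by (rule N.finite_Lim_measure_decseq[OF B])
    moreover have "e \<le> measure N (B n)" for n
      using large[of n] N.finite_measure_mono[of "A n" "B n"] B(1) by (force simp: B_def)
    ultimately have "e \<le> measure N (\<Inter>n. B n)"
      by (intro LIMSEQ_le_const) auto
    also have "(\<Inter>n. B n) = limsup A"
      by (simp add: B_def limsup_INF_SUP)
    finally show False
      using null \<open>0 < e\<close> by (simp add: measure_eq_0_null_sets)
  qed
  then show thesis
    using that by blast
qed

lemma small_positive_measure_subset:
  fixes E :: "'a::euclidean_space set"
  assumes "E \<in> sets lebesgue" "bounded E" "0 < measure lebesgue E" "0 < d"
  obtains A where "A \<subseteq> E" "A \<in> sets lebesgue" "0 < measure lebesgue A" "measure lebesgue A < d"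
proof -
  define V where "V = unit_ball_vol (real DIM('a))"
  have "0 < V"
    by (simp add: V_def)
  define r where "r = min 1 (d / (2 * V))"
  have r: "0 < r" "r \<le> 1"
    using \<open>0 < V\<close> \<open>0 < d\<close> by (auto simp: r_def)
  have small_ball: "measure lebesgue (ball x r) < d" for x :: 'a
  proof -
    have "measure lebesgue (ball x r) = V * r ^ DIM('a)"
      using r by (simp add: content_ball V_def)
    also have "\<dots> \<le> V * r"
      using r \<open>0 < V\<close> power_decreasing[of 1 "DIM('a)" r] by simp
    also have "\<dots> < d"
      using \<open>0 < V\<close> \<open>0 < d\<close> by (simp add: r_def min_def field_simps)
    finally show ?thesis .
  qed
  obtain K where "finite K" and cover: "closure E \<subseteq> (\<Union>x\<in>K. ball x r)"
    using \<open>bounded E\<close> \<open>0 < r\<close> compact_closure compact_eq_totally_bounded by metis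
  have pieces: "E \<inter> ball x r \<in> lmeasurable" for x
    using fmeasurable_Int_fmeasurable[OF lmeasurable_ball assms(1)] by (simp add: Int_commute)
  have "E \<subseteq> (\<Union>x\<in>K. E \<inter> ball x r)"
    using cover closure_subset by blast
  moreover have "(\<Union>x\<in>K. E \<inter> ball x r) \<in> lmeasurable"
    using \<open>finite K\<close> pieces by (rule fmeasurable.finite_UN)
  ultimately have "measure lebesgue E \<le> measure lebesgue (\<Union>x\<in>K. E \<inter> ball x r)"
    using assms(1) by (metis measure_mono_fmeasurable)
  also have "\<dots> \<le> (\<Sum>x\<in>K. measure lebesgue (E \<inter> ball x r))"
    using \<open>finite K\<close> pieces by (intro measure_UNION_le) auto
  finally obtain x where "0 < measure lebesgue (E \<inter> ball x r)"
    using \<open>0 < measure lebesgue E\<close> sum_nonpos[of K "\<lambda>x. measure lebesgue (E \<inter> ball x r)"]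
    by (meson not_le order.strict_trans2)
  moreover have "measure lebesgue (E \<inter> ball x r) < d"
    using small_ball[of x] by (meson le_less_trans measure_mono_fmeasurable Int_lower2 pieces fmeasurableD lmeasurable_ball)
  ultimately show thesis
    using that[of "E \<inter> ball x r"] pieces by auto
qed

lemma mem_scaleR_image_iff:
  fixes x :: "'a::real_vector"
  assumes "c \<noteq> 0"
  shows "x \<in> (*\<^sub>R) c ` S \<longleftrightarrow> inverse c *\<^sub>R x \<in> S"
  using assms by (auto intro!: image_eqI[of _ _ "inverse c *\<^sub>R x"])

lemma measure_lebesgue_scaleR_image:
  fixes S :: "'a::euclidean_space set"
  assumes "0 < c"
  shows "measure lebesgue ((*\<^sub>R) c ` S) = c ^ DIM('a) * measure lebesgue S"
  using measure_lebesgue_affine[of c 0 S] assms by simp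

definition vec_cmod :: "complex ^ 'n \<Rightarrow> real ^ 'n" where
  "vec_cmod z = (\<chi> i. cmod (z $ i))"

definition vec_rcis :: "(real ^ 'n) \<times> (real ^ 'n) \<Rightarrow> complex ^ 'n" where
  "vec_rcis p = (\<chi> i. rcis (fst p $ i) (snd p $ i))"

lemma has_derivative_vec_lambda_within:
  fixes f :: "'a::real_normed_vector \<Rightarrow> 'b::euclidean_space ^ 'n"
  assumes "\<And>i. ((\<lambda>x. f x $ i) has_derivative (\<lambda>h. f' h $ i)) (at a within S)"
  shows "(f has_derivative f') (at a within S)"
proof (subst has_derivative_componentwise_within, intro ballI)
  fix j :: "'b ^ 'n" assume "j \<in> Basis"
  then obtain i b where "j = axis i b" "b \<in> Basis"
    by (auto simp: Basis_vec_def)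
  then show "((\<lambda>x. f x \<bullet> j) has_derivative (\<lambda>x. f' x \<bullet> j)) (at a within S)"
    using bounded_linear.has_derivative[OF bounded_linear_inner_left assms[of i], of b]
    by (simp add: inner_axis)
qed

lemma differentiable_vec_rcis: "vec_rcis differentiable_on S"
  unfolding differentiable_on_def differentiable_def
proof
  fix p assume "p \<in> S"
  have coord: "((\<lambda>p. fst p $ i) has_derivative (\<lambda>h. fst h $ i)) (at p within S)"
              "((\<lambda>p. snd p $ i) has_derivative (\<lambda>h. snd h $ i)) (at p within S)" for i
    by (auto intro!: bounded_linear.has_derivative[OF bounded_linear_vec_nth] derivative_eq_intros)
  have rcis_eq: "rcis r a = of_real (r * cos a) + \<i> * of_real (r * sin a)" for r a
    by (simp add: rcis_def cis.ctr Complex_eq algebra_simps)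
  define D where "D i = (\<lambda>h. of_real (fst h $ i * cos (snd p $ i) - fst p $ i * sin (snd p $ i) * snd h $ i)
      + \<i> * of_real (fst h $ i * sin (snd p $ i) + fst p $ i * cos (snd p $ i) * snd h $ i))" for i
  have "((\<lambda>p. vec_rcis p $ i) has_derivative D i) (at p within S)" for i
    unfolding vec_rcis_def vec_lambda_beta rcis_eq
    by (rule derivative_eq_intros coord refl | simp add: D_def algebra_simps)+
  then show "\<exists>D. (vec_rcis has_derivative D) (at p within S)"
    by (intro exI[of _ "\<lambda>h. \<chi> i. D i h"] has_derivative_vec_lambda_within) simp
qed

lemma vec_rcis_vec_cmod_Arg: "vec_rcis (vec_cmod z, \<chi> i. Arg (z $ i)) = z"
  by (simp add: vec_rcis_def vec_cmod_def vec_eq_iff rcis_cmod_Arg)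

lemma negligible_vimage_vec_cmod:
  fixes A :: "(real ^ 'n) set"
  assumes "negligible A"
  shows "negligible (vec_cmod -` A)"
proof -
  obtain N where "A \<subseteq> N" "N \<in> null_sets lborel"
    using assms by (auto simp: negligible_iff_null_sets null_sets_completion_iff2)
  then have null: "N \<times> UNIV \<in> null_sets (lborel :: ((real ^ 'n) \<times> (real ^ 'n)) measure)"
    using lborel.times_in_null_sets1[of N lborel UNIV] by (simp add: lborel_prod)
  have "A \<times> UNIV \<subseteq> N \<times> UNIV"
    using \<open>A \<subseteq> N\<close> by blast
  then have "negligible (A \<times> (UNIV :: (real ^ 'n) set))"
    unfolding negligible_iff_null_sets using null by (metis null_sets_completion_subset null_sets_completionI)
  then have "negligible (vec_rcis ` (A \<times> UNIV))"
    by (intro negligible_differentiable_image_negligible differentiable_vec_rcis) auto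
  moreover have "vec_cmod -` A \<subseteq> vec_rcis ` (A \<times> UNIV)"
  proof
    fix z assume "z \<in> vec_cmod -` A"
    then have "(vec_cmod z, \<chi> i. Arg (z $ i)) \<in> A \<times> UNIV"
      by simp
    then show "z \<in> vec_rcis ` (A \<times> UNIV)"
      by (metis image_eqI vec_rcis_vec_cmod_Arg)
  qed
  ultimately show ?thesis
    by (rule negligible_subset)
qed

lemma continuous_vec_cmod: "continuous_on UNIV vec_cmod"
  unfolding vec_cmod_def by (intro continuous_on_vec_lambda continuous_intros)

lemma sets_lebesgue_vimage_vec_cmod:
  fixes A :: "(real ^ 'n) set"
  assumes "A \<in> sets lebesgue"
  shows "vec_cmod -` A \<in> sets lebesgue"
proof -
  obtain B N where "B \<in> sets borel" "negligible N" "B \<union> N = A"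
    using sets_lebesgue_almost_borel[OF assms] by metis
  have "vec_cmod -` B \<in> sets lebesgue"
    using borel_measurable_continuous_onI[OF continuous_vec_cmod] \<open>B \<in> sets borel\<close>
    by (metis measurable_sets_borel sets_completionI_sets sets_lborel)
  moreover have "vec_cmod -` N \<in> sets lebesgue"
    using negligible_vimage_vec_cmod[OF \<open>negligible N\<close>] by (simp add: negligible_iff_null_sets null_setsD2)
  ultimately show ?thesis
    using \<open>B \<union> N = A\<close> by (metis sets.Un vimage_Un)
qed

lemma complexification_eq_vimage: "complexification M = vec_cmod -` M"
  by (simp add: complexification_def vec_cmod_def vimage_def)

lemma complexification_real_polyball:
  "complexification (real_polyball \<rho>) = (complex_polydisc \<rho> :: (complex ^ 'n) set)"
  by (auto simp: complexification_def real_polyball_def complex_polydisc_def)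

lemma complexification_mono: "A \<subseteq> B \<Longrightarrow> complexification A \<subseteq> complexification B"
  by (auto simp: complexification_def)

lemma complexification_Un: "complexification (A \<union> B) = complexification A \<union> complexification B"
  by (auto simp: complexification_def)

lemma real_polyball_eq_box: "real_polyball \<rho> = box (\<chi> i. - \<rho>) (\<chi> i. \<rho>)"
  by (auto simp: real_polyball_def mem_box_cart abs_less_iff minus_less_iff)

lemma bounded_real_polyball [simp]: "bounded (real_polyball \<rho>)"
  by (simp add: real_polyball_eq_box)

lemma lmeasurable_real_polyball [simp]: "real_polyball \<rho> \<in> lmeasurable"
  by (simp add: real_polyball_eq_box)

lemma bounded_complex_polydisc: "bounded (complex_polydisc \<rho> :: (complex ^ 'n) set)"
proof -
  have "norm z \<le> CARD('n) * \<rho>" if "z \<in> complex_polydisc \<rho>" for z :: "complex ^ 'n"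
  proof -
    have "norm z \<le> (\<Sum>i\<in>UNIV. norm (z $ i))"
      by (simp add: norm_vec_def L2_set_le_sum)
    also have "\<dots> \<le> (\<Sum>i\<in>(UNIV::'n set). \<rho>)"
      using that by (intro sum_mono) (auto simp: complex_polydisc_def less_imp_le)
    finally show ?thesis by simp
  qed
  then show ?thesis
    by (auto simp: bounded_iff)
qed

lemma sets_lebesgue_complexification [simp]:
  "A \<in> sets lebesgue \<Longrightarrow> complexification A \<in> sets lebesgue"
  by (simp add: complexification_eq_vimage sets_lebesgue_vimage_vec_cmod)

lemma lmeasurable_complexification:
  fixes A :: "(real ^ 'n) set"
  assumes "A \<in> sets lebesgue" "A \<subseteq> real_polyball \<rho>"
  shows "complexification A \<in> lmeasurable"
proof (rule bounded_set_imp_lmeasurable)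
  show "bounded (complexification A)"
    using complexification_mono[OF assms(2)] bounded_complex_polydisc
    by (metis bounded_subset complexification_real_polyball)
  show "complexification A \<in> sets lebesgue"
    using assms(1) by simp
qed

lemma lmeasurable_complex_polydisc [simp]: "complex_polydisc \<rho> \<in> lmeasurable"
  by (metis complexification_real_polyball lmeasurable_complexification fmeasurableD
      lmeasurable_real_polyball order_refl)

lemma measure_complex_polydisc_pos:
  assumes "0 < \<rho>"
  shows "0 < measure lebesgue (complex_polydisc \<rho> :: (complex ^ 'n) set)"
proof -
  have "ball 0 \<rho> \<subseteq> (complex_polydisc \<rho> :: (complex ^ 'n) set)"
    by (auto simp: complex_polydisc_def) (meson Finite_Cartesian_Product.norm_nth_le le_less_trans)
  then have "measure lebesgue (ball 0 \<rho> :: (complex ^ 'n) set) \<le> measure lebesgue (complex_polydisc \<rho> :: (complex ^ 'n) set)"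
    by (intro measure_mono_fmeasurable) auto
  moreover have "0 < measure lebesgue (ball 0 \<rho> :: (complex ^ 'n) set)"
    using assms by (simp add: measure_completion)
  ultimately show ?thesis
    by linarith
qed

lemma measure_complex_polydisc_le:
  fixes M :: "(real ^ 'n) set"
  assumes "M \<subseteq> real_polyball \<rho>" "M \<in> sets lebesgue"
  shows "measure lebesgue (complex_polydisc \<rho> :: (complex ^ 'n) set)
     \<le> measure lebesgue (complexification M) + measure lebesgue (complexification (real_polyball \<rho> - M))"
proof -
  have "real_polyball \<rho> - M \<in> sets lebesgue"
    using assms(2) by (simp add: fmeasurableD sets.Diff)
  then have "complexification M \<in> lmeasurable" "complexification (real_polyball \<rho> - M) \<in> lmeasurable"
    using assms by (auto intro: lmeasurable_complexification)
  moreover have "complex_polydisc \<rho> = complexification M \<union> complexification (real_polyball \<rho> - M)"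
    using assms(1) by (metis Diff_partition complexification_Un complexification_real_polyball)
  ultimately show ?thesis
    by (simp add: measure_Un_le)
qed

lemma complexification_small_measure:
  assumes "0 < e"
  obtains \<delta> :: real where "0 < \<delta>"
    "\<And>A :: (real ^ 'n) set. A \<in> sets lebesgue \<Longrightarrow> A \<subseteq> real_polyball \<rho> \<Longrightarrow> measure lebesgue A < \<delta>
       \<Longrightarrow> measure lebesgue (complexification A) < e"
proof -
  let ?U = "complex_polydisc \<rho> :: (complex ^ 'n) set"
  define N where "N = distr (lebesgue_on ?U) lebesgue vec_cmod"
  have U: "?U \<in> lmeasurable"
    by simp
  have "vec_cmod \<in> lebesgue \<rightarrow>\<^sub>M lebesgue"
    by (auto intro!: measurableI simp: sets_lebesgue_vimage_vec_cmod)
  then have meas: "vec_cmod \<in> lebesgue_on ?U \<rightarrow>\<^sub>M lebesgue"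
    by (rule measurable_restrict_space1)
  have "finite_measure N"
    unfolding N_def using finite_measure_lebesgue_on[OF U] meas by (rule finite_measure.finite_measure_distr)
  moreover have "absolutely_continuous lebesgue N"
    unfolding absolutely_continuous_def N_def
  proof
    fix A :: "(real ^ 'n) set"
    assume "A \<in> null_sets lebesgue"
    then have "vec_cmod -` A \<in> null_sets lebesgue"
      using negligible_vimage_vec_cmod by (auto simp: negligible_iff_null_sets)
    then have "vec_cmod -` A \<inter> ?U \<in> null_sets lebesgue"
      using U by (blast intro: null_set_Int2 fmeasurableD)
    then show "A \<in> null_sets (distr (lebesgue_on ?U) lebesgue vec_cmod)"
      using U \<open>A \<in> null_sets lebesgue\<close>
      by (simp add: null_sets_distr_iff[OF meas] null_sets_restrict_space fmeasurableD null_setsD2)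
  qed
  moreover have "sets N = sets lebesgue"
    by (simp add: N_def)
  ultimately obtain \<delta> where "0 < \<delta>"
    and \<delta>: "\<And>A. A \<in> lmeasurable \<Longrightarrow> measure lebesgue A < \<delta> \<Longrightarrow> measure N A < e"
    using absolutely_continuous_small_measure \<open>0 < e\<close> by metis
  have "measure lebesgue (complexification A) < e"
    if "A \<in> sets lebesgue" "A \<subseteq> real_polyball \<rho>" "measure lebesgue A < \<delta>" for A :: "(real ^ 'n) set"
  proof -
    have "A \<in> lmeasurable"
      using that by (metis fmeasurable_Int_fmeasurable inf.absorb_iff2 lmeasurable_real_polyball)
    have "complexification A \<subseteq> ?U"
      using complexification_mono[OF that(2)] by (simp add: complexification_real_polyball)
    then have "measure N A = measure lebesgue (complexification A)"
      using U that(1) by (simp add: N_def measure_distr[OF meas] measure_restrict_space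
          complexification_eq_vimage Int_absorb2 fmeasurableD)
    then show ?thesis
      using \<delta>[OF \<open>A \<in> lmeasurable\<close> that(3)] by simp
  qed
  with \<open>0 < \<delta>\<close> show thesis
    using that by blast
qed

lemma kappa_tilde_le:
  fixes M :: "(real ^ 'n) set"
  assumes "M \<subseteq> real_polyball 1" "M \<in> sets lebesgue"
    and "measure lebesgue (complexification M) \<le> \<kappa> * measure lebesgue (complex_polydisc 1 :: (complex ^ 'n) set)"
  shows "kappa_tilde TYPE('n) \<kappa> \<le> measure lebesgue (real_polyball 1 - M)"
  unfolding kappa_tilde_def using assms
  by (intro cInf_lower bdd_belowI[where m=0]) auto

lemma le_kappa_tilde:
  assumes "0 \<le> \<kappa>"
    and "\<And>M :: (real ^ 'n) set. M \<subseteq> real_polyball 1 \<Longrightarrow> M \<in> sets lebesgue \<Longrightarrow>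
      measure lebesgue (complexification M) \<le> \<kappa> * measure lebesgue (complex_polydisc 1 :: (complex ^ 'n) set)
      \<Longrightarrow> c \<le> measure lebesgue (real_polyball 1 - M)"
  shows "c \<le> kappa_tilde TYPE('n) \<kappa>"
  unfolding kappa_tilde_def
proof (rule cInf_greatest)
  show "{measure lebesgue (real_polyball 1 - M) | M :: (real ^ 'n) set. M \<subseteq> real_polyball 1 \<and> M \<in> sets lebesgue \<and>
       measure lebesgue (complexification M) \<le> \<kappa> * measure lebesgue (complex_polydisc 1 :: (complex ^ 'n) set)} \<noteq> {}"
    using assms(1) measure_complex_polydisc_pos[OF zero_less_one, where 'n='n]
    by (auto simp: complexification_def intro!: exI[of _ "{}"])
qed (use assms(2) in auto)

lemma kappa_tilde_pos:
  assumes "0 \<le> \<kappa>" "\<kappa> < 1"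
  shows "0 < kappa_tilde TYPE('n::finite) \<kappa>"
proof -
  let ?U = "measure lebesgue (complex_polydisc 1 :: (complex ^ 'n) set)"
  have "0 < (1 - \<kappa>) * ?U"
    using assms measure_complex_polydisc_pos[OF zero_less_one, where 'n='n] by simp
  then obtain \<delta> where "0 < \<delta>" and \<delta>: "\<And>A :: (real ^ 'n) set. A \<in> sets lebesgue \<Longrightarrow> A \<subseteq> real_polyball 1
      \<Longrightarrow> measure lebesgue A < \<delta> \<Longrightarrow> measure lebesgue (complexification A) < (1 - \<kappa>) * ?U"
    using complexification_small_measure by blast
  have "\<delta> \<le> kappa_tilde TYPE('n) \<kappa>"
  proof (rule le_kappa_tilde)
    fix M :: "(real ^ 'n) set"
    assume M: "M \<subseteq> real_polyball 1" "M \<in> sets lebesgue" "measure lebesgue (complexification M) \<le> \<kappa> * ?U"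
    show "\<delta> \<le> measure lebesgue (real_polyball 1 - M)"
    proof (rule ccontr)
      assume "\<not> ?thesis"
      then have "measure lebesgue (complexification (real_polyball 1 - M)) < (1 - \<kappa>) * ?U"
        using M(2) by (intro \<delta>) (auto simp: fmeasurableD sets.Diff)
      then show False
        using measure_complex_polydisc_le[OF M(1,2)] M(3) by (simp add: algebra_simps)
    qed
  qed (use assms in simp)
  with \<open>0 < \<delta>\<close> show ?thesis
    by simp
qed

lemma measure_complexification_ge_unit:
  fixes M :: "(real ^ 'n) set"
  assumes "\<kappa> < 1" and M: "M \<subseteq> real_polyball 1" "M \<in> sets lebesgue"
    and small: "measure lebesgue (real_polyball 1 - M) \<le> kappa_tilde TYPE('n) \<kappa>"
  shows "\<kappa> * measure lebesgue (complex_polydisc 1 :: (complex ^ 'n) set) \<le> measure lebesgue (complexification M)"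
proof (rule ccontr)
  let ?U = "measure lebesgue (complex_polydisc 1 :: (complex ^ 'n) set)"
  define E where "E = real_polyball 1 - M"
  have E: "E \<in> sets lebesgue" "E \<subseteq> real_polyball 1"
    using M(2) by (auto simp: E_def fmeasurableD sets.Diff)
  assume "\<not> ?thesis"
  then have "0 < \<kappa> * ?U - measure lebesgue (complexification M)"
    by simp
  then obtain \<delta> where "0 < \<delta>" and \<delta>: "\<And>A :: (real ^ 'n) set. A \<in> sets lebesgue \<Longrightarrow> A \<subseteq> real_polyball 1
      \<Longrightarrow> measure lebesgue A < \<delta> \<Longrightarrow> measure lebesgue (complexification A) < \<kappa> * ?U - measure lebesgue (complexification M)"
    using complexification_small_measure by blast
  consider "measure lebesgue E = 0" | "0 < measure lebesgue E"
    using measure_nonneg[of lebesgue E] by linarith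
  then show False
  proof cases
    case 1
    then have "measure lebesgue (complexification E) < \<kappa> * ?U - measure lebesgue (complexification M)"
      using \<delta> E \<open>0 < \<delta>\<close> by simp
    moreover have "\<kappa> * ?U < ?U"
      using measure_complex_polydisc_pos[OF zero_less_one, where 'n='n] \<open>\<kappa> < 1\<close> by simp
    ultimately show False
      using measure_complex_polydisc_le[OF M] by (simp add: E_def)
  next
    case 2
    moreover have "bounded E"
      using E(2) bounded_real_polyball bounded_subset by blast
    ultimately obtain A where A: "A \<subseteq> E" "A \<in> sets lebesgue" "0 < measure lebesgue A" "measure lebesgue A < \<delta>"
      using E(1) \<open>0 < \<delta>\<close> by (metis small_positive_measure_subset)
    have "A \<subseteq> real_polyball 1"
      using A(1) E(2) by blast
    have "measure lebesgue (complexification (M \<union> A))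
        \<le> measure lebesgue (complexification M) + measure lebesgue (complexification A)"
      unfolding complexification_Un
      using M A(2) \<open>A \<subseteq> real_polyball 1\<close> by (intro measure_Un_le) (auto intro: lmeasurable_complexification)
    also have "\<dots> < \<kappa> * ?U"
      using \<delta>[OF A(2) \<open>A \<subseteq> real_polyball 1\<close> A(4)] by simp
    finally have "kappa_tilde TYPE('n) \<kappa> \<le> measure lebesgue (real_polyball 1 - (M \<union> A))"
      using M A(2) \<open>A \<subseteq> real_polyball 1\<close> by (intro kappa_tilde_le) auto
    also have "real_polyball 1 - (M \<union> A) = E - A"
      by (auto simp: E_def)
    also have "measure lebesgue (E - A) = measure lebesgue E - measure lebesgue A"
      using E A \<open>bounded E\<close> by (intro measurable_measure_Diff bounded_set_imp_lmeasurable)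
    finally show False
      using small A(3) by (simp add: E_def)
  qed
qed

lemma complexification_scaleR:
  fixes M :: "(real ^ 'n) set"
  assumes "0 < c"
  shows "complexification ((*\<^sub>R) c ` M) = (*\<^sub>R) c ` complexification M"
proof -
  have "vec_cmod (inverse c *\<^sub>R z) = inverse c *\<^sub>R vec_cmod z" for z :: "complex ^ 'n"
    using assms by (simp add: vec_cmod_def vec_eq_iff)
  then show ?thesis
    using assms by (auto simp: set_eq_iff complexification_eq_vimage mem_scaleR_image_iff)
qed

lemma real_polyball_scaleR:
  assumes "0 < c"
  shows "real_polyball c = (*\<^sub>R) c ` (real_polyball 1 :: (real ^ 'n) set)"
  using assms by (auto simp: set_eq_iff mem_scaleR_image_iff real_polyball_def abs_mult field_simps)

lemma complex_polydisc_scaleR: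
  assumes "0 < c"
  shows "complex_polydisc c = (*\<^sub>R) c ` (complex_polydisc 1 :: (complex ^ 'n) set)"
  using complexification_scaleR[OF assms] real_polyball_scaleR[OF assms]
  by (metis complexification_real_polyball)

lemma measure_complexification_ge:
  fixes M :: "(real ^ 'n) set"
  assumes "\<kappa> < 1" "0 < \<rho>" "M \<subseteq> real_polyball \<rho>" "M \<in> sets lebesgue"
    and small: "measure lebesgue (real_polyball \<rho> - M) \<le> kappa_tilde TYPE('n) \<kappa> * \<rho> ^ CARD('n)"
  shows "\<kappa> * measure lebesgue (complex_polydisc \<rho> :: (complex ^ 'n) set) \<le> measure lebesgue (complexification M)"
proof -
  define M' where "M' = (*\<^sub>R) \<rho> -` M"
  have M: "M = (*\<^sub>R) \<rho> ` M'"
    using \<open>0 < \<rho>\<close> by (auto simp: M'_def mem_scaleR_image_iff)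
  have inj: "inj ((*\<^sub>R) \<rho> :: real ^ 'n \<Rightarrow> real ^ 'n)"
    using \<open>0 < \<rho>\<close> by (simp add: inj_on_def)
  have "M' \<subseteq> real_polyball 1"
    using assms(3) unfolding M real_polyball_scaleR[OF \<open>0 < \<rho>\<close>] by (simp add: inj_image_subset_iff[OF inj])
  moreover have "M' \<in> sets lebesgue"
    using measurable_sets[OF lebesgue_measurable_scaling assms(4)] by (simp add: M'_def)
  moreover have "\<rho> ^ CARD('n) * measure lebesgue (real_polyball 1 - M') \<le> \<rho> ^ CARD('n) * kappa_tilde TYPE('n) \<kappa>"
    using small \<open>0 < \<rho>\<close> unfolding M real_polyball_scaleR[OF \<open>0 < \<rho>\<close>]
    by (simp add: image_set_diff[OF inj, symmetric] measure_lebesgue_scaleR_image mult.commute)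
  ultimately have "\<kappa> * measure lebesgue (complex_polydisc 1 :: (complex ^ 'n) set) \<le> measure lebesgue (complexification M')"
    using assms(1,2) by (intro measure_complexification_ge_unit) auto
  then show ?thesis
    using \<open>0 < \<rho>\<close> unfolding M complex_polydisc_scaleR[OF \<open>0 < \<rho>\<close>] complexification_scaleR[OF \<open>0 < \<rho>\<close>]
    by (simp add: measure_lebesgue_scaleR_image)
qed

theorem proposition1:
  fixes \<kappa> :: real
  assumes "0 < \<kappa>" and "\<kappa> < 1"
  shows "kappa_tilde TYPE('n::finite) \<kappa> > 0 \<and>
    (\<forall>\<rho>>0. \<forall>M :: (real ^ 'n) set.
        M \<subseteq> real_polyball \<rho> \<and> M \<in> sets lebesgue \<and>
        measure lebesgue (real_polyball \<rho> - M) \<le> kappa_tilde TYPE('n) \<kappa> * \<rho> ^ CARD('n)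
        \<longrightarrow> measure lebesgue (complexification M) \<ge> \<kappa> * measure lebesgue (complex_polydisc \<rho> :: (complex ^ 'n) set))"
  using kappa_tilde_pos[OF less_imp_le assms(2)] measure_complexification_ge[OF assms(2)] assms(1) by blast

end
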